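(* Let $X\in\mathbb{R}^{n\times r}$ with $X^{\mathsf{T}}X=I_r$ represent a point of $\operatorname{Gr}(n,r)$ and let $X_\perp\in\mathbb{R}^{n\times(n-r)}$ be such that $[X\;X_\perp]$ is orthogonal. Let $\Delta\in\mathbf{T}_X$, let $X(t)$ be the geodesic and $T_{X,\Delta}(t)$ the transport matrix determined by $\Delta$, and let $X_\perp(t)=T_{X,\Delta}(t)X_\perp$. Identify $\mathbf{T}_X$ with $\mathbb{R}^{(n-r)r}$ via $\Delta_1=X_\perp D_1\mapsto \operatorname{vec}(D_1)$, and consider a linear operator in local coordinates $\hat A:\mathbb{R}^{(n-r)r}\to\mathbb{R}^{(n-r)r}$ together with the corresponding linear operator in global coordinates $A:\mathbb{R}^{nr}\to\mathbb{R}^{nr}$ (in which tangents in $\mathbf{T}_X$ are embedded via $\Delta_1\mapsto\operatorname{vec}(\Delta_1)$). Then \[ A=(I\otimes X_\perp)\hat A(I\otimes X_\perp^{\mathsf{T}}),\qquad \hat A=(I\otimes X_\perp^{\mathsf{T}})A(I\otimes X_\perp). \] Furthermore, the parallel transported operator has the same local representation for all $t$ along the geodesic: if $A(t)=(I\otimes T_{X,\Delta}(t))\,A\,(I\otimes \widetilde T(t))$, where $\widetilde T(t)=T_{X(t),-\Delta(t)}(t)$ with $\Delta(t)=T_{X,\Delta}(t)\Delta$ is the transport matrix from $X(t)$ back to $X$ along the same geodesic, and $\hat A(t)=(I\otimes X_\perp(t)^{\mathsf{T}})A(t)(I\otimes X_\perp(t))$, then $\hat A(t)=\hat A$ for all 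$t$.
   Context: Points of $\operatorname{Gr}(n,r)$ are represented by $n\times r$ matrices with orthonormal columns; $\mathbf{T}_X=\{\Delta\in\mathbb{R}^{n\times r}:X^{\mathsf{T}}\Delta=0\}$, and every tangent can be written $\Delta=X_\perp D$ with $D=X_\perp^{\mathsf{T}}\Delta\in\mathbb{R}^{(n-r)\times r}$ (local coordinates). For $\Delta=U\Sigma V^{\mathsf{T}}$ a thin SVD, the geodesic is $X(t)=[XV\;U]\begin{bmatrix}\cos\Sigma t\\ \sin\Sigma t\end{bmatrix}V^{\mathsf{T}}$ and the transport matrix is $T_{X,\Delta}(t)=[XV\;U]\begin{bmatrix}-\sin\Sigma t\\ \cos\Sigma t\end{bmatrix}U^{\mathsf{T}}+(I-UU^{\mathsf{T}})$; a tangent $\Delta_2\in\mathbf{T}_X$ is parallel transported to $T_{X,\Delta}(t)\Delta_2\in\mathbf{T}_{X(t)}$. $\operatorname{vec}$ is column-wise vectorization, $I=I_r$, and $\otimes$ is the Kronecker product, so $\operatorname{vec}(X_\perp D)=(I_r\otimes X_\perp)\operatorname{vec}(D)$. The global-coordinate operator $A$ corresponding to $\hat A$ is the operator that maps $\operatorname{vec}(X_\perp D_1)$ to $\operatorname{vec}(X_\perp D_2)$ whenever $\operatorname{vec}(D_2)=\hat A\operatorname{vec}(D_1)$, acting on vectorized tangents through the projection $I\otimes X_\perp X_\perp^{\mathsf{T}}$ onto the tangent space. *)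

theory Defs
  imports Complex_Main "Jordan_Normal_Form.Matrix"
begin

definition hcat :: "real mat \<Rightarrow> real mat \<Rightarrow> real mat" where
  "hcat X Y = mat (dim_row X) (dim_col X + dim_col Y)
     (\<lambda>(i,j). if j < dim_col X then X $$ (i,j) else Y $$ (i, j - dim_col X))"

definition orth_square :: "real mat \<Rightarrow> bool" where
  "orth_square Q \<longleftrightarrow> dim_row Q = dim_col Q \<and> transpose_mat Q * Q = 1\<^sub>m (dim_col Q)"

definition vecm :: "real mat \<Rightarrow> real vec" where
  "vecm M = vec (dim_row M * dim_col M) (\<lambda>k. M $$ (k mod dim_row M, k div dim_row M))"

definition kron :: "real mat \<Rightarrow> real mat \<Rightarrow> real mat" where
  "kron A B = mat (dim_row A * dim_row B) (dim_col A * dim_col B)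
     (\<lambda>(i,j). A $$ (i div dim_row B, j div dim_col B) * B $$ (i mod dim_row B, j mod dim_col B))"

definition diag_fun :: "(real \<Rightarrow> real) \<Rightarrow> real mat \<Rightarrow> real mat" where
  "diag_fun f S = mat (dim_row S) (dim_col S) (\<lambda>(i,j). if i = j then f (S $$ (i,i)) else 0)"

definition thin_svd :: "real mat \<Rightarrow> real mat \<Rightarrow> real mat \<Rightarrow> real mat \<Rightarrow> bool" where
  "thin_svd D U S V \<longleftrightarrow>
     U \<in> carrier_mat (dim_row D) (dim_col D) \<and>
     S \<in> carrier_mat (dim_col D) (dim_col D) \<and>
     V \<in> carrier_mat (dim_col D) (dim_col D) \<and>
     transpose_mat U * U = 1\<^sub>m (dim_col D) \<and>
     (\<forall>i < dim_col D. \<forall>j < dim_col D. i \<noteq> j \<longrightarrow> S $$ (i,j) = 0) \<and>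
     (\<forall>i < dim_col D. S $$ (i,i) \<ge> 0) \<and>
     transpose_mat V * V = 1\<^sub>m (dim_col D) \<and>
     D = U * S * transpose_mat V"

(* Geodesic X(t) = [XV U] [cos St; sin St] V^T  (block product written out). *)
definition geod :: "real mat \<Rightarrow> real mat \<Rightarrow> real mat \<Rightarrow> real mat \<Rightarrow> real \<Rightarrow> real mat" where
  "geod X U S V t =
     (X * V * diag_fun (\<lambda>s. cos (s * t)) S + U * diag_fun (\<lambda>s. sin (s * t)) S) * transpose_mat V"

(* Transport matrix T(t) = [XV U] [-sin St; cos St] U^T + (I - U U^T). *)
definition transp :: "real mat \<Rightarrow> real mat \<Rightarrow> real mat \<Rightarrow> real mat \<Rightarrow> real \<Rightarrow> real mat" where
  "transp X U S V t =
     (- (X * V * diag_fun (\<lambda>s. sin (s * t)) S) + U * diag_fun (\<lambda>s. cos (s * t)) S) * transpose_mat U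
     + (1\<^sub>m (dim_row X) - U * transpose_mat U)"

end

theory Submission
  imports Defs "Jordan_Normal_Form.Determinant"
begin

text \<open>
  Since every tangent at \<open>X\<close> has the form \<open>X\<^sub>\<perp> D\<close>, the vectorisation identity
  \<open>vec(X\<^sub>\<perp> D) = (I \<otimes> X\<^sub>\<perp>) vec(D)\<close> together with \<open>A = A (I \<otimes> X\<^sub>\<perp>X\<^sub>\<perp>\<^sup>T)\<close>
  gives \<open>A = (I \<otimes> X\<^sub>\<perp>) \<hat>A (I \<otimes> X\<^sub>\<perp>\<^sup>T)\<close>, and \<open>X\<^sub>\<perp>\<^sup>T X\<^sub>\<perp> = I\<close> recovers \<open>\<hat>A\<close>.
  For the transported operator it then suffices that \<open>L X\<^sub>\<perp> = I\<close> and \<open>X\<^sub>\<perp>\<^sup>T R = I\<close>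
  for \<open>L = X\<^sub>\<perp>(t)\<^sup>T T(t)\<close> and \<open>R = T\<^sup>~(t) X\<^sub>\<perp>(t)\<close>. Writing
  \<open>-\<Delta>(t) = W \<Sigma> V\<^sup>T\<close> with \<open>W = XV sin \<Sigma>t - U cos \<Sigma>t\<close>, the reverse transport
  \<open>T\<^sup>~(t)\<close> depends only on the products \<open>V f(\<Sigma>) W\<^sup>T\<close> and \<open>W g(\<Sigma>) W\<^sup>T\<close> with
  \<open>f(0) = g(0) = 0\<close>, which are the same for every thin SVD of \<open>-\<Delta>(t)\<close>; both identities then
  reduce entrywise to \<open>sin\<^sup>2 + cos\<^sup>2 = 1\<close>.
\<close>

lemma mult_assoc_dim:
  "dim_col A = dim_row B \<Longrightarrow> dim_col B = dim_row C \<Longrightarrow> (A :: 'a::semiring_0 mat) * B * C = A * (B * C)"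
  by (rule assoc_mult_mat[of A "dim_row A" "dim_col A" B "dim_col B" C "dim_col C"]) auto

lemma mult_add_distrib_left_dim:
  "dim_col A = dim_row B \<Longrightarrow> dim_row C = dim_row B \<Longrightarrow> dim_col C = dim_col B \<Longrightarrow>
    (A :: 'a::semiring_0 mat) * (B + C) = A * B + A * C"
  by (rule mult_add_distrib_mat[of A "dim_row A" "dim_col A" B "dim_col B"]) auto

lemma mult_add_distrib_right_dim:
  "dim_row A = dim_row B \<Longrightarrow> dim_col A = dim_col B \<Longrightarrow> dim_col B = dim_row C \<Longrightarrow>
    ((A :: 'a::semiring_0 mat) + B) * C = A * C + B * C"
  by (rule add_mult_distrib_mat[of A "dim_row A" "dim_col A" B C "dim_col C"]) auto

lemma minus_eq_add_uminus_dim: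
  "dim_row A = dim_row B \<Longrightarrow> dim_col A = dim_col B \<Longrightarrow> (A :: 'a::group_add mat) - B = A + - B"
  by (intro eq_matI) auto

lemma uminus_add_dim:
  "dim_row A = dim_row B \<Longrightarrow> dim_col A = dim_col B \<Longrightarrow> - ((A :: 'a::ab_group_add mat) + B) = - A + - B"
  by (intro eq_matI) auto

lemma transpose_mult_dim:
  "dim_col A = dim_row B \<Longrightarrow>
    transpose_mat ((A :: 'a::comm_semiring_0 mat) * B) = transpose_mat B * transpose_mat A"
  by (rule transpose_mult[of A "dim_row A" "dim_col A" B "dim_col B"]) auto

lemma transpose_add_dim:
  "dim_row A = dim_row B \<Longrightarrow> dim_col A = dim_col B \<Longrightarrow>
    transpose_mat ((A :: 'a::plus mat) + B) = transpose_mat A + transpose_mat B"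
  by (intro eq_matI) auto

lemma zero_mult_dim: "b = dim_row A \<Longrightarrow> 0\<^sub>m a b * (A :: 'a::semiring_0 mat) = 0\<^sub>m a (dim_col A)"
  by (intro eq_matI) (auto simp: scalar_prod_def)

lemma mult_zero_dim: "b = dim_col A \<Longrightarrow> (A :: 'a::semiring_0 mat) * 0\<^sub>m b c = 0\<^sub>m (dim_row A) c"
  by (intro eq_matI) (auto simp: scalar_prod_def)

lemma zero_add_dim: "a = dim_row A \<Longrightarrow> b = dim_col A \<Longrightarrow> 0\<^sub>m a b + (A :: 'a::monoid_add mat) = A"
  by (intro eq_matI) auto

lemma add_zero_dim: "a = dim_row A \<Longrightarrow> b = dim_col A \<Longrightarrow> (A :: 'a::monoid_add mat) + 0\<^sub>m a b = A"
  by (intro eq_matI) auto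

lemma uminus_zero_mat: "- 0\<^sub>m a b = (0\<^sub>m a b :: 'a::group_add mat)"
  by (intro eq_matI) auto

lemmas mat_dim_simps = mult_assoc_dim mult_add_distrib_left_dim mult_add_distrib_right_dim
  uminus_add_dim transpose_mult_dim
  transpose_add_dim transpose_uminus zero_mult_dim mult_zero_dim zero_add_dim add_zero_dim uminus_zero_mat

lemma orthogonal_mult_transpose:
  "V \<in> carrier_mat r r \<Longrightarrow> transpose_mat V * V = 1\<^sub>m r \<Longrightarrow> V * transpose_mat V = (1\<^sub>m r :: 'a::field mat)"
  using mat_mult_left_right_inverse[of "transpose_mat V" r V] by auto

lemma eq_mat_mult_vecI:
  assumes "A \<in> carrier_mat N M" "B \<in> carrier_mat N M"
    and "\<And>w. w \<in> carrier_vec M \<Longrightarrow> A *\<^sub>v w = (B :: 'a::semiring_1 mat) *\<^sub>v w"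
  shows "A = B"
proof (rule eq_matI)
  fix i j assume ij: "i < dim_row B" "j < dim_col B"
  have "A *\<^sub>v unit_vec M j = B *\<^sub>v unit_vec M j" by (rule assms(3)) simp
  hence "(A *\<^sub>v unit_vec M j) $ i = (B *\<^sub>v unit_vec M j) $ i" by simp
  thus "A $$ (i,j) = B $$ (i,j)" using assms(1,2) ij by auto
qed (use assms in auto)

lemma sum_lessThan_mult_split: "(\<Sum>k<r*c. g k) = (\<Sum>q<r. \<Sum>p<c. g (q*c+p))"
  for g :: "nat \<Rightarrow> 'a::comm_monoid_add"
proof (induction r)
  case (Suc r)
  have "(\<Sum>k<Suc r*c. g k) = (\<Sum>k<r*c. g k) + (\<Sum>k\<in>{r*c..<r*c+c}. g k)"
    by (simp add: add.commute lessThan_atLeast0 sum.atLeastLessThan_concat)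
  also have "(\<Sum>k\<in>{m..<m+c}. g k) = (\<Sum>p<c. g (m+p))" for m
    by (induction c) auto
  finally show ?case using Suc by simp
qed simp

lemma orth_square_hcat:
  assumes X: "X \<in> carrier_mat n r" and Xp: "Xp \<in> carrier_mat n m"
    and orth: "orth_square (hcat X Xp)"
  shows "transpose_mat Xp * Xp = 1\<^sub>m m" "transpose_mat X * Xp = 0\<^sub>m r m"
proof -
  let ?H = "hcat X Xp"
  have H: "dim_row ?H = n" "dim_col ?H = r + m" using X Xp by (auto simp: hcat_def)
  have HH: "transpose_mat ?H * ?H = 1\<^sub>m (r + m)" using orth H by (simp add: orth_square_def)
  have H_left: "?H $$ (k, i) = X $$ (k, i)" if "k < n" "i < r" for k i
    using that X Xp by (simp add: hcat_def)
  have H_right: "?H $$ (k, r + i) = Xp $$ (k, i)" if "k < n" "i < m" for k i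
    using that X Xp by (simp add: hcat_def)
  have HH_index: "(transpose_mat ?H * ?H) $$ (i,j) = (\<Sum>k<n. ?H $$ (k,i) * ?H $$ (k,j))"
    if "i < r + m" "j < r + m" for i j
    using that H by (simp add: scalar_prod_def lessThan_atLeast0)
  show "transpose_mat Xp * Xp = 1\<^sub>m m"
  proof (rule eq_matI)
    fix i j assume ij: "i < dim_row (1\<^sub>m m)" "j < dim_col (1\<^sub>m m)"
    have "(transpose_mat Xp * Xp) $$ (i,j) = (\<Sum>k<n. ?H $$ (k, r + i) * ?H $$ (k, r + j))"
      using ij Xp by (simp add: scalar_prod_def lessThan_atLeast0 H_right)
    also have "\<dots> = 1\<^sub>m m $$ (i,j)" using ij by (simp add: HH_index[symmetric] HH)
    finally show "(transpose_mat Xp * Xp) $$ (i,j) = 1\<^sub>m m $$ (i,j)" .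
  qed (use Xp in auto)
  show "transpose_mat X * Xp = 0\<^sub>m r m"
  proof (rule eq_matI)
    fix i j assume ij: "i < dim_row (0\<^sub>m r m)" "j < dim_col (0\<^sub>m r m)"
    have "(transpose_mat X * Xp) $$ (i,j) = (\<Sum>k<n. ?H $$ (k,i) * ?H $$ (k, r + j))"
      using ij X Xp by (simp add: scalar_prod_def lessThan_atLeast0 H_left H_right)
    also have "\<dots> = 0\<^sub>m r m $$ (i,j)" using ij by (simp add: HH_index[symmetric] HH)
    finally show "(transpose_mat X * Xp) $$ (i,j) = 0\<^sub>m r m $$ (i,j)" .
  qed (use X Xp in auto)
qed

lemma dim_kron [simp]:
  "dim_row (kron A B) = dim_row A * dim_row B" "dim_col (kron A B) = dim_col A * dim_col B"
  by (auto simp: kron_def)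

lemma index_kron:
  "i < dim_row A * dim_row B \<Longrightarrow> j < dim_col A * dim_col B \<Longrightarrow>
    kron A B $$ (i,j) = A $$ (i div dim_row B, j div dim_col B) * B $$ (i mod dim_row B, j mod dim_col B)"
  by (auto simp: kron_def)

lemma kron_one_mult:
  assumes "dim_col A = dim_row B"
  shows "kron (1\<^sub>m r) A * kron (1\<^sub>m r) B = kron (1\<^sub>m r) (A * B)"
proof (rule eq_matI)
  fix i j assume ij: "i < dim_row (kron (1\<^sub>m r) (A * B))" "j < dim_col (kron (1\<^sub>m r) (A * B))"
  let ?a = "dim_row A" and ?c = "dim_col A" and ?d = "dim_col B"
  have pos: "?a > 0" "?d > 0" using ij by (auto intro!: Nat.gr0I)
  have i_split: "i div ?a < r" "i mod ?a < ?a" using ij pos by (auto simp: less_mult_imp_div_less)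
  have j_split: "j div ?d < r" "j mod ?d < ?d" using ij pos by (auto simp: less_mult_imp_div_less)
  have "(kron (1\<^sub>m r) A * kron (1\<^sub>m r) B) $$ (i,j) =
      (\<Sum>k<r*?c. kron (1\<^sub>m r) A $$ (i,k) * kron (1\<^sub>m r) B $$ (k,j))"
    using ij assms by (simp add: scalar_prod_def lessThan_atLeast0)
  also have "\<dots> = (\<Sum>q<r. \<Sum>p<?c. kron (1\<^sub>m r) A $$ (i, q*?c+p) * kron (1\<^sub>m r) B $$ (q*?c+p, j))"
    by (rule sum_lessThan_mult_split)
  also have "\<dots> = (\<Sum>q<r. \<Sum>p<?c.
      if q = i div ?a \<and> q = j div ?d then A $$ (i mod ?a, p) * B $$ (p, j mod ?d) else 0)"
  proof (intro sum.cong refl)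
    fix q p assume qp: "q \<in> {..<r}" "p \<in> {..<?c}"
    have "Suc q * ?c \<le> r * ?c" by (rule mult_le_mono1) (use qp in auto)
    hence "q*?c+p < r * ?c" using qp by simp
    moreover have "(q*?c+p) div ?c = q" "(q*?c+p) mod ?c = p" using qp by auto
    ultimately show "kron (1\<^sub>m r) A $$ (i, q*?c+p) * kron (1\<^sub>m r) B $$ (q*?c+p, j) =
        (if q = i div ?a \<and> q = j div ?d then A $$ (i mod ?a, p) * B $$ (p, j mod ?d) else 0)"
      using ij qp i_split j_split assms by (simp add: index_kron)
  qed
  also have "\<dots> = (\<Sum>q<r. if q = i div ?a then
      (if i div ?a = j div ?d then (\<Sum>p<?c. A $$ (i mod ?a, p) * B $$ (p, j mod ?d)) else 0) else 0)"
    by (rule sum.cong) auto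
  also have "\<dots> = (if i div ?a = j div ?d then (\<Sum>p<?c. A $$ (i mod ?a, p) * B $$ (p, j mod ?d)) else 0)"
    using i_split by (subst sum.delta) auto
  also have "\<dots> = kron (1\<^sub>m r) (A * B) $$ (i,j)"
    using ij i_split j_split assms by (simp add: index_kron scalar_prod_def lessThan_atLeast0)
  finally show "(kron (1\<^sub>m r) A * kron (1\<^sub>m r) B) $$ (i,j) = kron (1\<^sub>m r) (A * B) $$ (i,j)" .
qed auto

lemma kron_one_one: "kron (1\<^sub>m r) (1\<^sub>m m) = 1\<^sub>m (r*m)"
proof (rule eq_matI)
  fix i j assume ij: "i < dim_row (1\<^sub>m (r*m))" "j < dim_col (1\<^sub>m (r*m))"
  hence pos: "m > 0" by (auto intro!: Nat.gr0I)
  have "i div m < r" "j div m < r" using ij pos by (auto simp: less_mult_imp_div_less)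
  moreover have "(i div m = j div m \<and> i mod m = j mod m) = (i = j)"
    by (metis div_mult_mod_eq)
  ultimately show "kron (1\<^sub>m r) (1\<^sub>m m) $$ (i,j) = 1\<^sub>m (r*m) $$ (i,j)"
    using ij pos by (auto simp: index_kron)
qed auto

lemma dim_vecm [simp]: "dim_vec (vecm M) = dim_row M * dim_col M"
  by (simp add: vecm_def)

lemma index_vecm: "k < dim_row M * dim_col M \<Longrightarrow> vecm M $ k = M $$ (k mod dim_row M, k div dim_row M)"
  by (simp add: vecm_def)

definition unvecm :: "nat \<Rightarrow> nat \<Rightarrow> real vec \<Rightarrow> real mat" where
  "unvecm a b w = mat a b (\<lambda>(i,j). w $ (j*a+i))"

lemma unvecm_carrier [simp]: "unvecm a b w \<in> carrier_mat a b"
  by (simp add: unvecm_def)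

lemma vecm_unvecm:
  assumes "w \<in> carrier_vec (a*b)"
  shows "vecm (unvecm a b w) = w"
proof (rule eq_vecI)
  fix k assume "k < dim_vec w"
  hence k: "k < a*b" using assms by simp
  hence "a > 0" by (auto intro!: Nat.gr0I)
  moreover have "k div a < b" using k by (metis less_mult_imp_div_less mult.commute)
  ultimately show "vecm (unvecm a b w) $ k = w $ k" using k
    by (simp add: index_vecm unvecm_def mult.commute)
qed (use assms in \<open>auto simp: unvecm_def\<close>)

lemma vecm_mult:
  assumes Xp: "Xp \<in> carrier_mat n m" and D: "D \<in> carrier_mat m r"
  shows "vecm (Xp * D) = kron (1\<^sub>m r) Xp *\<^sub>v vecm D"
proof (rule eq_vecI)
  fix k assume "k < dim_vec (kron (1\<^sub>m r) Xp *\<^sub>v vecm D)"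
  hence k: "k < r * n" "k < n * r" using Xp by (auto simp: mult.commute)
  hence "n > 0" by (auto intro!: Nat.gr0I)
  hence k_split: "k div n < r" "k mod n < n" using k by (auto simp: less_mult_imp_div_less)
  have "(kron (1\<^sub>m r) Xp *\<^sub>v vecm D) $ k = (\<Sum>l<r*m. kron (1\<^sub>m r) Xp $$ (k,l) * vecm D $ l)"
    using k Xp D by (simp add: scalar_prod_def lessThan_atLeast0 mult.commute)
  also have "\<dots> = (\<Sum>q<r. \<Sum>p<m. kron (1\<^sub>m r) Xp $$ (k, q*m+p) * vecm D $ (q*m+p))"
    by (rule sum_lessThan_mult_split)
  also have "\<dots> = (\<Sum>q<r. \<Sum>p<m. if q = k div n then Xp $$ (k mod n, p) * D $$ (p, q) else 0)"
  proof (intro sum.cong refl)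
    fix q p assume qp: "q \<in> {..<r}" "p \<in> {..<m}"
    have "Suc q * m \<le> r * m" by (rule mult_le_mono1) (use qp in auto)
    hence "q*m+p < r * m" using qp by simp
    moreover have "(q*m+p) div m = q" "(q*m+p) mod m = p" using qp by auto
    ultimately show "kron (1\<^sub>m r) Xp $$ (k, q*m+p) * vecm D $ (q*m+p) =
        (if q = k div n then Xp $$ (k mod n, p) * D $$ (p, q) else 0)"
      using qp k_split Xp D k by (auto simp: index_kron index_vecm mult.commute)
  qed
  also have "\<dots> = (\<Sum>q<r. if q = k div n then (\<Sum>p<m. Xp $$ (k mod n, p) * D $$ (p, q)) else 0)"
    by (rule sum.cong) auto
  also have "\<dots> = (\<Sum>p<m. Xp $$ (k mod n, p) * D $$ (p, k div n))"
    using k_split by (subst sum.delta) auto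
  also have "\<dots> = vecm (Xp * D) $ k"
    using k_split k Xp D by (simp add: index_vecm scalar_prod_def lessThan_atLeast0)
  finally show "vecm (Xp * D) $ k = (kron (1\<^sub>m r) Xp *\<^sub>v vecm D) $ k" by simp
qed (use Xp D in auto)

lemma global_operator_eq:
  fixes Xp Ahat A :: "real mat"
  assumes Xp: "Xp \<in> carrier_mat n m"
    and Ahat: "Ahat \<in> carrier_mat (m * r) (m * r)"
    and A: "A \<in> carrier_mat (n * r) (n * r)"
    and A_corr: "\<forall>D1 D2. D1 \<in> carrier_mat m r \<longrightarrow> D2 \<in> carrier_mat m r \<longrightarrow>
                   vecm D2 = Ahat *\<^sub>v vecm D1 \<longrightarrow> A *\<^sub>v vecm (Xp * D1) = vecm (Xp * D2)"
    and A_proj: "\<forall>w \<in> carrier_vec (n * r).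
                   A *\<^sub>v w = A *\<^sub>v (kron (1\<^sub>m r) (Xp * transpose_mat Xp) *\<^sub>v w)"
  shows "A = kron (1\<^sub>m r) Xp * Ahat * kron (1\<^sub>m r) (transpose_mat Xp)"
proof (rule eq_mat_mult_vecI[OF A])
  show "kron (1\<^sub>m r) Xp * Ahat * kron (1\<^sub>m r) (transpose_mat Xp) \<in> carrier_mat (n * r) (n * r)"
    using Xp Ahat by (auto simp: mult.commute)
  fix w :: "real vec" assume w: "w \<in> carrier_vec (n * r)"
  define W where "W = unvecm n r w"
  have W: "W \<in> carrier_mat n r" "vecm W = w" using w by (auto simp: W_def vecm_unvecm)
  define D1 where "D1 = transpose_mat Xp * W"
  have D1: "D1 \<in> carrier_mat m r" using Xp W by (simp add: D1_def)
  define D2 where "D2 = unvecm m r (Ahat *\<^sub>v vecm D1)"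
  have "vecm D1 \<in> carrier_vec (m*r)" using D1 unfolding carrier_vec_def carrier_mat_def by simp
  then have "Ahat *\<^sub>v vecm D1 \<in> carrier_vec (m*r)" by (rule mult_mat_vec_carrier[OF Ahat])
  then have D2: "D2 \<in> carrier_mat m r" "vecm D2 = Ahat *\<^sub>v vecm D1"
    by (auto simp: D2_def vecm_unvecm)
  have "kron (1\<^sub>m r) (Xp * transpose_mat Xp) *\<^sub>v w = vecm (Xp * transpose_mat Xp * W)"
    using W Xp by (subst vecm_mult[of _ n n]) auto
  also have "Xp * transpose_mat Xp * W = Xp * D1"
    unfolding D1_def using Xp W by (subst assoc_mult_mat[of _ n m _ n]) auto
  finally have "A *\<^sub>v w = A *\<^sub>v vecm (Xp * D1)"
    using bspec[OF A_proj w] by simp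
  also have "\<dots> = vecm (Xp * D2)"
    using A_corr D1 D2 by blast
  also have "\<dots> = kron (1\<^sub>m r) Xp *\<^sub>v (Ahat *\<^sub>v vecm D1)"
    using vecm_mult[OF Xp D2(1)] D2(2) by simp
  also have "vecm D1 = kron (1\<^sub>m r) (transpose_mat Xp) *\<^sub>v w"
    unfolding D1_def using vecm_mult[of "transpose_mat Xp" m n W r] Xp W by simp
  also have "kron (1\<^sub>m r) Xp *\<^sub>v (Ahat *\<^sub>v (kron (1\<^sub>m r) (transpose_mat Xp) *\<^sub>v w))
      = (kron (1\<^sub>m r) Xp * Ahat * kron (1\<^sub>m r) (transpose_mat Xp)) *\<^sub>v w"
  proof -
    have K: "kron (1\<^sub>m r) Xp \<in> carrier_mat (n*r) (m*r)"
      "kron (1\<^sub>m r) (transpose_mat Xp) \<in> carrier_mat (m*r) (n*r)"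
      using Xp unfolding carrier_mat_def by (auto simp: mult.commute)
    show ?thesis
      using assoc_mult_mat_vec[OF mult_carrier_mat[OF K(1) Ahat] K(2) w]
        assoc_mult_mat_vec[OF K(1) Ahat mult_mat_vec_carrier[OF K(2) w]] by simp
  qed
  finally show "A *\<^sub>v w = (kron (1\<^sub>m r) Xp * Ahat * kron (1\<^sub>m r) (transpose_mat Xp)) *\<^sub>v w" .
qed

lemma kron_sandwich_eq:
  fixes Xp Ahat A L R :: "real mat"
  assumes Xp: "Xp \<in> carrier_mat n m" and Ahat: "Ahat \<in> carrier_mat (m * r) (m * r)"
    and A_eq: "A = kron (1\<^sub>m r) Xp * Ahat * kron (1\<^sub>m r) (transpose_mat Xp)"
    and L: "L \<in> carrier_mat m n" and R: "R \<in> carrier_mat n m"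
    and L_Xp: "L * Xp = 1\<^sub>m m" and Xp_R: "transpose_mat Xp * R = 1\<^sub>m m"
  shows "kron (1\<^sub>m r) L * A * kron (1\<^sub>m r) R = Ahat"
proof -
  let ?K = "kron (1\<^sub>m r)"
  have "?K L * A * ?K R = ?K L * ?K Xp * Ahat * (?K (transpose_mat Xp) * ?K R)"
    unfolding A_eq using Xp Ahat L R by (simp add: mult_assoc_dim mult.commute)
  also have "\<dots> = ?K (L * Xp) * Ahat * ?K (transpose_mat Xp * R)"
    using L Xp R by (simp add: kron_one_mult)
  also have "\<dots> = Ahat"
    unfolding L_Xp Xp_R kron_one_one using Ahat by (simp add: mult.commute)
  finally show ?thesis .
qed

lemma dim_diag_fun [simp]: "dim_row (diag_fun f S) = dim_row S" "dim_col (diag_fun f S) = dim_col S"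
  by (auto simp: diag_fun_def)

lemma index_diag_fun [simp]:
  "i < dim_row S \<Longrightarrow> j < dim_col S \<Longrightarrow> diag_fun f S $$ (i,j) = (if i = j then f (S $$ (i,i)) else 0)"
  by (auto simp: diag_fun_def)

lemma index_diag_fun_mult:
  assumes "dim_row S = dim_col S" "dim_row R = dim_col S" "i < dim_row S" "j < dim_col R"
  shows "(diag_fun f S * R) $$ (i,j) = f (S $$ (i,i)) * R $$ (i,j)"
proof -
  have "(diag_fun f S * R) $$ (i,j) = (\<Sum>k=0..<dim_col S. (if i = k then f (S $$ (i,i)) else 0) * R $$ (k,j))"
    using assms by (simp add: scalar_prod_def)
  also have "\<dots> = f (S $$ (i,i)) * R $$ (i,j)"
    using assms by (simp add: if_distrib[of "\<lambda>x. x * _"] cong: if_cong)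
  finally show ?thesis .
qed

lemma index_mult_diag_fun:
  assumes "dim_row S = dim_col S" "dim_col R = dim_row S" "i < dim_row R" "j < dim_col S"
  shows "(R * diag_fun f S) $$ (i,j) = R $$ (i,j) * f (S $$ (j,j))"
proof -
  have "(R * diag_fun f S) $$ (i,j) = (\<Sum>k=0..<dim_col S. R $$ (i, k) * (if k = j then f (S $$ (k, k)) else 0))"
    using assms by (simp add: scalar_prod_def)
  also have "\<dots> = R $$ (i,j) * f (S $$ (j,j))"
    using assms by (simp add: if_distrib[of "\<lambda>x. _ * x"] cong: if_cong)
  finally show ?thesis .
qed

lemma diag_fun_mult: "dim_row S = dim_col S \<Longrightarrow> diag_fun f S * diag_fun g S = diag_fun (\<lambda>s. f s * g s) S"
  by (intro eq_matI, subst index_diag_fun_mult) auto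

lemma diag_fun_mult_assoc:
  "dim_row S = dim_col S \<Longrightarrow> dim_row R = dim_col S \<Longrightarrow>
    diag_fun f S * (diag_fun g S * R) = diag_fun (\<lambda>s. f s * g s) S * R"
  by (simp add: mult_assoc_dim[symmetric] diag_fun_mult)

lemma transpose_diag_fun: "dim_row S = dim_col S \<Longrightarrow> transpose_mat (diag_fun f S) = diag_fun f S"
  by (intro eq_matI) auto

lemma diag_fun_id:
  "S \<in> carrier_mat r r \<Longrightarrow> \<forall>i<r. \<forall>j<r. i \<noteq> j \<longrightarrow> S $$ (i,j) = 0 \<Longrightarrow> diag_fun (\<lambda>s. s) S = S"
  by (intro eq_matI) auto

lemma diag_fun_commute_of_square_commute:
  fixes S S' M :: "real mat"
  assumes S: "S \<in> carrier_mat r r" and S': "S' \<in> carrier_mat r r" and M: "M \<in> carrier_mat r r"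
    and S_nonneg: "\<forall>i<r. S $$ (i,i) \<ge> 0" and S'_nonneg: "\<forall>i<r. S' $$ (i,i) \<ge> 0"
    and square_commute: "diag_fun (\<lambda>s. s * s) S' * M = M * diag_fun (\<lambda>s. s * s) S"
  shows "diag_fun g S' * M = M * diag_fun g S"
proof (rule eq_matI)
  fix i j assume "i < dim_row (M * diag_fun g S)" "j < dim_col (M * diag_fun g S)"
  hence ij: "i < r" "j < r" using S M by auto
  have index_left: "(diag_fun h S' * M) $$ (i,j) = h (S' $$ (i,i)) * M $$ (i,j)" for h
    using ij S' M by (subst index_diag_fun_mult) auto
  have index_right: "(M * diag_fun h S) $$ (i,j) = M $$ (i,j) * h (S $$ (j,j))" for h
    using ij S M by (subst index_mult_diag_fun) auto
  have "g (S' $$ (i,i)) * M $$ (i,j) = M $$ (i,j) * g (S $$ (j,j))"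
  proof (cases "M $$ (i,j) = 0")
    case False
    have "S' $$ (i,i) * S' $$ (i,i) * M $$ (i,j) = (diag_fun (\<lambda>s. s * s) S' * M) $$ (i,j)"
      by (rule index_left[symmetric])
    also have "\<dots> = M $$ (i,j) * (S $$ (j,j) * S $$ (j,j))"
      unfolding square_commute by (rule index_right)
    finally have "S' $$ (i,i) * S' $$ (i,i) * M $$ (i,j) = M $$ (i,j) * (S $$ (j,j) * S $$ (j,j))" .
    with False have "(S' $$ (i,i))\<^sup>2 = (S $$ (j,j))\<^sup>2"
      by (simp add: power2_eq_square)
    with S_nonneg S'_nonneg ij have "S' $$ (i,i) = S $$ (j,j)"
      by (simp add: power2_eq_iff_nonneg)
    then show ?thesis by simp
  qed simp
  then show "(diag_fun g S' * M) $$ (i,j) = (M * diag_fun g S) $$ (i,j)"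
    by (simp add: index_left index_right)
qed (use S S' M in auto)

text \<open>
  Two factorizations \<open>U' S' V'\<^sup>T = U S V\<^sup>T\<close> with orthogonal \<open>V, V'\<close> and nonnegative diagonal
  \<open>S, S'\<close> agree on \<open>V f(S) U\<^sup>T\<close> and \<open>U g(S) U\<^sup>T\<close> whenever \<open>f(s) = s k(s)\<close> and
  \<open>g(s) = s\<^sup>2 k(s)\<close>: the matrix \<open>M = V'\<^sup>T V\<close> intertwines \<open>S'\<^sup>2\<close> and \<open>S\<^sup>2\<close> (compare the two
  expressions for the Gram matrix), hence every function of \<open>S'\<close> and \<open>S\<close>. Only \<open>S U\<^sup>T U S = S\<^sup>2\<close>
  is required of \<open>U\<close>, so columns belonging to zero singular values are unconstrained.
\<close>

lemma svd_gram_intertwiner: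
  fixes U S V U' S' V' :: "real mat"
  assumes U: "U \<in> carrier_mat n r" and S: "S \<in> carrier_mat r r" and V: "V \<in> carrier_mat r r"
    and U': "U' \<in> carrier_mat n r" and S': "S' \<in> carrier_mat r r" and V': "V' \<in> carrier_mat r r"
    and S_diag: "\<forall>i<r. \<forall>j<r. i \<noteq> j \<longrightarrow> S $$ (i,j) = 0"
    and S'_diag: "\<forall>i<r. \<forall>j<r. i \<noteq> j \<longrightarrow> S' $$ (i,j) = 0"
    and VV: "transpose_mat V * V = 1\<^sub>m r" and V'V': "transpose_mat V' * V' = 1\<^sub>m r"
    and U'U': "transpose_mat U' * U' = 1\<^sub>m r"
    and SUUS: "S * (transpose_mat U * (U * S)) = diag_fun (\<lambda>s. s * s) S"
    and svd_eq: "U' * (S' * transpose_mat V') = U * (S * transpose_mat V)"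
  shows "diag_fun (\<lambda>s. s * s) S' * (transpose_mat V' * V) = transpose_mat V' * V * diag_fun (\<lambda>s. s * s) S"
proof -
  have d: "dim_row U = n" "dim_col U = r" "dim_row S = r" "dim_col S = r" "dim_row V = r" "dim_col V = r"
    "dim_row U' = n" "dim_col U' = r" "dim_row S' = r" "dim_col S' = r" "dim_row V' = r" "dim_col V' = r"
    using assms by auto
  have V'V't: "V' * transpose_mat V' = 1\<^sub>m r" by (rule orthogonal_mult_transpose[OF V' V'V'])
  have cancel: "\<And>R. dim_row R = r \<Longrightarrow> transpose_mat V * (V * R) = R"
    "\<And>R. dim_row R = r \<Longrightarrow> transpose_mat V' * (V' * R) = R"
    "\<And>R. dim_row R = r \<Longrightarrow> V' * (transpose_mat V' * R) = R"
    "\<And>R. dim_row R = r \<Longrightarrow> transpose_mat U' * (U' * R) = R"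
    using VV V'V' V'V't U'U' by (simp_all add: mult_assoc_dim[symmetric] d)
  have S_sym: "transpose_mat S = S" "transpose_mat S' = S'"
    using transpose_diag_fun[of S "\<lambda>s. s"] transpose_diag_fun[of S' "\<lambda>s. s"] d
      diag_fun_id[OF S S_diag] diag_fun_id[OF S' S'_diag] by auto
  have S'S': "S' * S' = diag_fun (\<lambda>s. s * s) S'"
    using diag_fun_mult[of S' "\<lambda>s. s" "\<lambda>s. s"] diag_fun_id[OF S' S'_diag] d by simp
  define D where "D = U * (S * transpose_mat V)"
  have gram: "transpose_mat D * D = V * (diag_fun (\<lambda>s. s * s) S * transpose_mat V)"
    unfolding D_def by (simp add: mat_dim_simps d S_sym SUUS[symmetric])
  have gram': "transpose_mat D * D = V' * (diag_fun (\<lambda>s. s * s) S' * transpose_mat V')"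
    unfolding D_def svd_eq[symmetric] by (simp add: mat_dim_simps d S_sym cancel S'S'[symmetric])
  have "transpose_mat V' * (transpose_mat D * D) * V = diag_fun (\<lambda>s. s * s) S' * (transpose_mat V' * V)"
    unfolding gram' by (simp add: mult_assoc_dim d cancel)
  moreover have "transpose_mat V' * (transpose_mat D * D) * V = transpose_mat V' * V * diag_fun (\<lambda>s. s * s) S"
    unfolding gram by (simp add: mult_assoc_dim d cancel VV)
  ultimately show ?thesis by simp
qed

lemma svd_calculus_unique:
  fixes U S V U' S' V' :: "real mat"
  assumes U: "U \<in> carrier_mat n r" and S: "S \<in> carrier_mat r r" and V: "V \<in> carrier_mat r r"
    and U': "U' \<in> carrier_mat n r" and S': "S' \<in> carrier_mat r r" and V': "V' \<in> carrier_mat r r"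
    and S_diag: "\<forall>i<r. \<forall>j<r. i \<noteq> j \<longrightarrow> S $$ (i,j) = 0" and S_nonneg: "\<forall>i<r. S $$ (i,i) \<ge> 0"
    and S'_diag: "\<forall>i<r. \<forall>j<r. i \<noteq> j \<longrightarrow> S' $$ (i,j) = 0" and S'_nonneg: "\<forall>i<r. S' $$ (i,i) \<ge> 0"
    and VV: "transpose_mat V * V = 1\<^sub>m r" and V'V': "transpose_mat V' * V' = 1\<^sub>m r"
    and U'U': "transpose_mat U' * U' = 1\<^sub>m r"
    and SUUS: "S * (transpose_mat U * (U * S)) = diag_fun (\<lambda>s. s * s) S"
    and svd_eq: "U' * (S' * transpose_mat V') = U * (S * transpose_mat V)"
  shows "V' * (diag_fun (\<lambda>s. s * k s) S' * transpose_mat U') = V * (diag_fun (\<lambda>s. s * k s) S * transpose_mat U)"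
    and "U' * (diag_fun (\<lambda>s. s * s * k s) S' * transpose_mat U') = U * (diag_fun (\<lambda>s. s * s * k s) S * transpose_mat U)"
proof -
  have d: "dim_row U = n" "dim_col U = r" "dim_row S = r" "dim_col S = r" "dim_row V = r" "dim_col V = r"
    "dim_row U' = n" "dim_col U' = r" "dim_row S' = r" "dim_col S' = r" "dim_row V' = r" "dim_col V' = r"
    using assms by auto
  have S_id: "diag_fun (\<lambda>s. s) S = S" and S'_id: "diag_fun (\<lambda>s. s) S' = S'"
    using diag_fun_id[OF S S_diag] diag_fun_id[OF S' S'_diag] .
  have S_sym: "transpose_mat S = S" "transpose_mat S' = S'"
    using transpose_diag_fun[of S "\<lambda>s. s"] transpose_diag_fun[of S' "\<lambda>s. s"] d S_id S'_id by auto
  define M where "M = transpose_mat V' * V"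
  have M: "M \<in> carrier_mat r r" by (simp add: M_def d carrier_matI)
  hence Md: "dim_row M = r" "dim_col M = r" by auto
  have intertwine: "diag_fun g S' * M = M * diag_fun g S" for g
    using diag_fun_commute_of_square_commute[OF S S' M S_nonneg S'_nonneg]
      svd_gram_intertwiner[OF U S V U' S' V' S_diag S'_diag VV V'V' U'U' SUUS svd_eq]
    unfolding M_def by blast
  have "transpose_mat M * M = transpose_mat V * (V' * transpose_mat V') * V"
    unfolding M_def by (simp add: transpose_mult_dim mult_assoc_dim d)
  then have MM: "transpose_mat M * M = 1\<^sub>m r"
    unfolding orthogonal_mult_transpose[OF V' V'V'] using VV d by simp
  have U'S': "U' * S' = U * (S * transpose_mat M)"
  proof -
    have "U' * S' = U' * (S' * transpose_mat V') * V'" by (simp add: mult_assoc_dim d V'V')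
    also have "\<dots> = U * (S * transpose_mat M)" unfolding svd_eq M_def by (simp add: mat_dim_simps d)
    finally show ?thesis .
  qed
  have S'U': "S' * transpose_mat U' = M * (S * transpose_mat U)"
    using arg_cong[OF U'S', of transpose_mat] M by (simp add: mat_dim_simps d S_sym)
  have split_k: "diag_fun (\<lambda>s. s * k s) S'' = diag_fun k S'' * S''"
    if "S'' \<in> carrier_mat r r" "diag_fun (\<lambda>s. s) S'' = S''" for S''
    using diag_fun_mult[of S'' k "\<lambda>s. s"] that by (auto simp: mult.commute)
  show "V' * (diag_fun (\<lambda>s. s * k s) S' * transpose_mat U') = V * (diag_fun (\<lambda>s. s * k s) S * transpose_mat U)"
  proof -
    have "V' * (diag_fun (\<lambda>s. s * k s) S' * transpose_mat U') = V' * (diag_fun k S' * M * (S * transpose_mat U))"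
      unfolding split_k[OF S' S'_id] by (simp add: mult_assoc_dim d Md S'U')
    also have "\<dots> = V' * transpose_mat V' * V * (diag_fun k S * (S * transpose_mat U))"
      unfolding intertwine unfolding M_def by (simp add: mult_assoc_dim d)
    also have "\<dots> = V * (diag_fun (\<lambda>s. s * k s) S * transpose_mat U)"
      unfolding orthogonal_mult_transpose[OF V' V'V'] split_k[OF S S_id] using V by (simp add: mult_assoc_dim d)
    finally show ?thesis .
  qed
  have split_kk: "diag_fun (\<lambda>s. s * s * k s) S'' = S'' * (diag_fun k S'' * S'')"
    if "S'' \<in> carrier_mat r r" "diag_fun (\<lambda>s. s) S'' = S''" for S''
    using diag_fun_mult[of S'' "\<lambda>s. s" "\<lambda>s. k s * s"] diag_fun_mult[of S'' k "\<lambda>s. s"] that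
    by (auto simp: mult.commute mult.left_commute)
  have MkM: "transpose_mat M * (diag_fun k S' * M) = diag_fun k S"
    unfolding intertwine by (simp add: mult_assoc_dim[symmetric] d Md MM)
  show "U' * (diag_fun (\<lambda>s. s * s * k s) S' * transpose_mat U') = U * (diag_fun (\<lambda>s. s * s * k s) S * transpose_mat U)"
  proof -
    have "U' * (diag_fun (\<lambda>s. s * s * k s) S' * transpose_mat U') = U' * S' * diag_fun k S' * (S' * transpose_mat U')"
      unfolding split_kk[OF S' S'_id] by (simp add: mult_assoc_dim d)
    also have "\<dots> = U * (S * transpose_mat M) * diag_fun k S' * (M * (S * transpose_mat U))"
      unfolding U'S' S'U' ..
    also have "\<dots> = U * (S * ((transpose_mat M * (diag_fun k S' * M)) * (S * transpose_mat U)))"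
      by (simp add: mult_assoc_dim d Md)
    also have "\<dots> = U * (diag_fun (\<lambda>s. s * s * k s) S * transpose_mat U)"
      unfolding MkM split_kk[OF S S_id] by (simp add: mult_assoc_dim d)
    finally show ?thesis .
  qed
qed

lemma transp_expand:
  assumes "X \<in> carrier_mat n r" "U \<in> carrier_mat n r" "S \<in> carrier_mat r r" "V \<in> carrier_mat r r"
  shows "transp X U S V t = 1\<^sub>m n + - (X * (V * (diag_fun (\<lambda>s. sin (s*t)) S * transpose_mat U)))
     + U * (diag_fun (\<lambda>s. cos (s*t) - 1) S * transpose_mat U)"
proof -
  have cos_split: "diag_fun (\<lambda>s. cos (s*t)) S = diag_fun (\<lambda>s. cos (s*t) - 1) S + 1\<^sub>m r"
    using assms by (intro eq_matI) auto
  show ?thesis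
    unfolding transp_def cos_split using assms
    by (simp add: mat_dim_simps minus_eq_add_uminus_dim, intro eq_matI) auto
qed

lemma transp_carrier: "transp X U S V t \<in> carrier_mat (dim_row U) (dim_row U)"
  unfolding transp_def carrier_mat_def by simp

lemma geod_carrier: "geod X U S V t \<in> carrier_mat (dim_row U) (dim_row V)"
  unfolding geod_def carrier_mat_def by simp

lemma geod_expand:
  assumes "X \<in> carrier_mat n r" "U \<in> carrier_mat n r" "S \<in> carrier_mat r r" "V \<in> carrier_mat r r"
    and "transpose_mat V * V = 1\<^sub>m r"
  shows "geod X U S V t = X + X * (V * (diag_fun (\<lambda>s. cos (s*t) - 1) S * transpose_mat V))
     + U * (diag_fun (\<lambda>s. sin (s*t)) S * transpose_mat V)"
proof -
  have cos_split: "diag_fun (\<lambda>s. cos (s*t)) S = diag_fun (\<lambda>s. cos (s*t) - 1) S + 1\<^sub>m r"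
    using assms by (intro eq_matI) auto
  have "X * (V * transpose_mat V) = X"
    using assms orthogonal_mult_transpose[of V r] by simp
  then show ?thesis
    unfolding geod_def cos_split using assms
    by (simp add: mat_dim_simps, intro eq_matI) auto
qed

lemma sin_mult_sin: "sin x * sin x = 1 - cos x * cos (x::real)"
  using sin_cos_squared_add[of x] by (simp add: power2_eq_square)

locale grassmann_geodesic =
  fixes n r m :: nat and X Xp U S V :: "real mat" and t :: real
  assumes X: "X \<in> carrier_mat n r" and Xp: "Xp \<in> carrier_mat n m" and U: "U \<in> carrier_mat n r"
    and S: "S \<in> carrier_mat r r" and V: "V \<in> carrier_mat r r"
    and XX: "transpose_mat X * X = 1\<^sub>m r" and XpXp: "transpose_mat Xp * Xp = 1\<^sub>m m"
    and XXp: "transpose_mat X * Xp = 0\<^sub>m r m"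
    and UU: "transpose_mat U * U = 1\<^sub>m r" and VV: "transpose_mat V * V = 1\<^sub>m r"
    and XUS: "transpose_mat X * U * S = 0\<^sub>m r r"
    and S_diag: "\<forall>i<r. \<forall>j<r. i \<noteq> j \<longrightarrow> S $$ (i,j) = 0"
begin

lemma dims:
  "dim_row X = n" "dim_col X = r" "dim_row U = n" "dim_col U = r" "dim_row S = r" "dim_col S = r"
  "dim_row V = r" "dim_col V = r" "dim_row Xp = n" "dim_col Xp = m"
  using X Xp U S V by auto

lemma XpX: "transpose_mat Xp * X = 0\<^sub>m m r"
  using arg_cong[OF XXp, of transpose_mat] by (simp add: transpose_mult_dim dims)

lemma VVt: "V * transpose_mat V = 1\<^sub>m r"
  using orthogonal_mult_transpose[OF V VV] .

text \<open>Only columns of \<open>U\<close> with nonzero singular value need be orthogonal to \<open>X\<close>, so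
  \<open>X\<^sup>T U f(S)\<close> vanishes only for \<open>f(0) = 0\<close>.\<close>

lemma XU_diag_fun_zero:
  assumes "f 0 = 0"
  shows "transpose_mat X * U * diag_fun f S = 0\<^sub>m r r"
proof (rule eq_matI)
  fix i j assume ij: "i < dim_row (0\<^sub>m r r)" "j < dim_col (0\<^sub>m r (r::nat))"
  have "(transpose_mat X * U * S) $$ (i,j) = (transpose_mat X * U) $$ (i,j) * S $$ (j,j)"
    using index_mult_diag_fun[of S "transpose_mat X * U" i j "\<lambda>s. s"] diag_fun_id[OF S S_diag] ij dims
    by simp
  hence "(transpose_mat X * U) $$ (i,j) * S $$ (j,j) = 0" using XUS ij by simp
  hence "(transpose_mat X * U) $$ (i,j) * f (S $$ (j,j)) = 0" using assms by auto
  thus "(transpose_mat X * U * diag_fun f S) $$ (i,j) = 0\<^sub>m r r $$ (i,j)"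
    using index_mult_diag_fun[of S "transpose_mat X * U" i j f] ij dims by simp
qed (auto simp: dims)

lemma zero_rules:
  assumes "f 0 = 0"
  shows "transpose_mat X * (U * diag_fun f S) = 0\<^sub>m r r"
    and "dim_row R = r \<Longrightarrow> transpose_mat X * (U * (diag_fun f S * R)) = 0\<^sub>m r (dim_col R)"
    and "diag_fun f S * (transpose_mat U * X) = 0\<^sub>m r r"
    and "dim_row R = r \<Longrightarrow> diag_fun f S * (transpose_mat U * (X * R)) = 0\<^sub>m r (dim_col R)"
proof -
  show XU: "transpose_mat X * (U * diag_fun f S) = 0\<^sub>m r r"
    using XU_diag_fun_zero[of f, OF assms] by (simp add: mult_assoc_dim dims)
  have "diag_fun f S * transpose_mat U * X = transpose_mat (transpose_mat X * U * diag_fun f S)"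
    by (simp add: transpose_mult_dim dims transpose_diag_fun mult_assoc_dim)
  then show UX: "diag_fun f S * (transpose_mat U * X) = 0\<^sub>m r r"
    using XU_diag_fun_zero[of f, OF assms] by (simp add: mult_assoc_dim dims)
  assume R: "dim_row R = r"
  show "transpose_mat X * (U * (diag_fun f S * R)) = 0\<^sub>m r (dim_col R)"
    using XU R by (simp add: mult_assoc_dim[symmetric] dims zero_mult_dim)
  show "diag_fun f S * (transpose_mat U * (X * R)) = 0\<^sub>m r (dim_col R)"
    using UX R by (simp add: mult_assoc_dim[symmetric] dims zero_mult_dim)
qed

lemma cancel_rules:
  "dim_row R = r \<Longrightarrow> transpose_mat X * (X * R) = R"
  "dim_row R = r \<Longrightarrow> transpose_mat U * (U * R) = R"
  "dim_row R = r \<Longrightarrow> transpose_mat V * (V * R) = R"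
  "dim_row R = r \<Longrightarrow> V * (transpose_mat V * R) = R"
  "dim_row R = m \<Longrightarrow> transpose_mat Xp * (Xp * R) = R"
  "dim_row R = m \<Longrightarrow> transpose_mat X * (Xp * R) = 0\<^sub>m r (dim_col R)"
  "dim_row R = r \<Longrightarrow> transpose_mat Xp * (X * R) = 0\<^sub>m m (dim_col R)"
  using XX UU VV VVt XpXp XXp XpX by (simp_all add: mult_assoc_dim[symmetric] dims zero_mult_dim)

lemma diag_fun_rules:
  "diag_fun f S * diag_fun g S = diag_fun (\<lambda>s. f s * g s) S"
  "dim_row R = r \<Longrightarrow> diag_fun f S * (diag_fun g S * R) = diag_fun (\<lambda>s. f s * g s) S * R"
  "transpose_mat (diag_fun f S) = diag_fun f S"
  by (simp_all add: diag_fun_mult diag_fun_mult_assoc transpose_diag_fun dims)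

lemmas geodesic_simps = mat_dim_simps minus_eq_add_uminus_dim dims zero_rules cancel_rules diag_fun_rules
  XX UU VV VVt XpXp XXp XpX transp_expand[OF X U S V] geod_expand[OF X U S V VV]

definition perp_block :: "(real \<Rightarrow> real) \<Rightarrow> real mat" where
  "perp_block f = transpose_mat Xp * (U * (diag_fun f S * (transpose_mat U * Xp)))"

lemma dim_perp_block [simp]: "dim_row (perp_block f) = m" "dim_col (perp_block f) = m"
  by (simp_all add: perp_block_def dims)

lemma index_perp_block:
  assumes "i < m" "j < m"
  shows "perp_block f $$ (i,j) =
    (\<Sum>k<r. (transpose_mat Xp * U) $$ (i,k) * f (S $$ (k,k)) * (transpose_mat U * Xp) $$ (k,j))"
proof -
  have "perp_block f = (transpose_mat Xp * U) * (diag_fun f S * (transpose_mat U * Xp))"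
    unfolding perp_block_def by (simp add: mult_assoc_dim dims)
  hence "perp_block f $$ (i,j) =
      (\<Sum>k<r. (transpose_mat Xp * U) $$ (i,k) * (diag_fun f S * (transpose_mat U * Xp)) $$ (k,j))"
    using assms by (simp add: dims scalar_prod_def lessThan_atLeast0)
  also have "\<dots> = (\<Sum>k<r. (transpose_mat Xp * U) $$ (i,k) * f (S $$ (k,k)) * (transpose_mat U * Xp) $$ (k,j))"
    using assms by (intro sum.cong refl, subst index_diag_fun_mult) (auto simp: dims)
  finally show ?thesis .
qed

text \<open>After normalisation both sides are \<open>1\<^sub>m m\<close> plus a sum of blocks \<open>perp_block f\<close>;
  entrywise the functions \<open>f\<close> add up to \<open>sin\<^sup>2 + cos\<^sup>2 - 1 = 0\<close>.\<close>

lemma transp_perp_orthonormal: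
  "transpose_mat (transp X U S V t * Xp) * (transp X U S V t * Xp) = 1\<^sub>m m"
  apply (simp add: geodesic_simps)
  apply (simp only: perp_block_def[symmetric])
  apply (intro eq_matI)
   apply (simp_all add: index_perp_block sum.distrib[symmetric])
  apply (intro sum.neutral ballI)
  apply (simp add: sin_mult_sin algebra_simps)
  done

definition W :: "real mat" where
  "W = X * (V * diag_fun (\<lambda>s. sin (s*t)) S) + - (U * diag_fun (\<lambda>s. cos (s*t) - 1) S) + - U"

lemma W_carrier: "W \<in> carrier_mat n r"
  unfolding W_def using X U S V by auto

lemma minus_transp_Delta: "- (transp X U S V t * (U * (S * transpose_mat V))) = W * (S * transpose_mat V)"
proof -
  have "- (transp X U S V t * (U * (diag_fun (\<lambda>s. s) S * transpose_mat V)))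
      = W * (diag_fun (\<lambda>s. s) S * transpose_mat V)"
    unfolding W_def by (simp add: geodesic_simps, intro eq_matI) (simp_all add: dims)
  then show ?thesis unfolding diag_fun_id[OF S S_diag] .
qed

lemma W_gram: "S * (transpose_mat W * (W * S)) = diag_fun (\<lambda>s. s * s) S"
proof -
  have "diag_fun (\<lambda>s. s) S * (transpose_mat W * (W * diag_fun (\<lambda>s. s) S)) = diag_fun (\<lambda>s. s * s) S"
    unfolding W_def by (simp add: geodesic_simps, intro eq_matI) (simp_all add: dims sin_mult_sin algebra_simps)
  then show ?thesis unfolding diag_fun_id[OF S S_diag] .
qed

text \<open>The singular values of \<open>-\<Delta>(t) = W S V\<^sup>T\<close> are again \<open>S\<close>, so \<open>k(s) = sin(st)/s\<close> and
  \<open>k(s) = (cos(st) - 1)/s\<^sup>2\<close> in \<open>svd_calculus_unique\<close> rewrite the reverse transport in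
  terms of \<open>W\<close>, \<open>S\<close>, \<open>V\<close>; their junk values at \<open>s = 0\<close> are multiplied by zero.\<close>

lemma transp_reverse_eq:
  assumes S_nonneg: "\<forall>i<r. S $$ (i,i) \<ge> 0"
    and svd': "thin_svd (- (transp X U S V t * (U * S * transpose_mat V))) U' S' V'"
  shows "transp (geod X U S V t) U' S' V' t =
    1\<^sub>m n + - (geod X U S V t * (V * (diag_fun (\<lambda>s. sin (s*t)) S * transpose_mat W)))
      + W * (diag_fun (\<lambda>s. cos (s*t) - 1) S * transpose_mat W)"
proof -
  have T: "transp X U S V t \<in> carrier_mat n n" using transp_carrier[of X U S V t] U by simp
  from svd' T U S V have U': "U' \<in> carrier_mat n r" and S': "S' \<in> carrier_mat r r"
    and V': "V' \<in> carrier_mat r r" and U'U': "transpose_mat U' * U' = 1\<^sub>m r"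
    and S'_diag: "\<forall>i<r. \<forall>j<r. i \<noteq> j \<longrightarrow> S' $$ (i,j) = 0" and S'_nonneg: "\<forall>i<r. S' $$ (i,i) \<ge> 0"
    and V'V': "transpose_mat V' * V' = 1\<^sub>m r"
    and svd'_eq: "- (transp X U S V t * (U * S * transpose_mat V)) = U' * S' * transpose_mat V'"
    unfolding thin_svd_def by auto
  have "U' * (S' * transpose_mat V') = W * (S * transpose_mat V)"
    using svd'_eq minus_transp_Delta U' S' V' by (simp add: mult_assoc_dim dims)
  note calculus = svd_calculus_unique[OF W_carrier S V U' S' V' S_diag S_nonneg S'_diag S'_nonneg
      VV V'V' U'U' W_gram this]
  have "(\<lambda>s. s * (sin (s*t) / s)) = (\<lambda>s::real. sin (s*t))"
    and "(\<lambda>s. s * s * ((cos (s*t) - 1) / (s * s))) = (\<lambda>s::real. cos (s*t) - 1)"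
    by auto
  with calculus[of "\<lambda>s. sin (s*t) / s"] calculus[of "\<lambda>s. (cos (s*t) - 1) / (s * s)"]
  have "V' * (diag_fun (\<lambda>s. sin (s*t)) S' * transpose_mat U') = V * (diag_fun (\<lambda>s. sin (s*t)) S * transpose_mat W)"
    and "U' * (diag_fun (\<lambda>s. cos (s*t) - 1) S' * transpose_mat U') = W * (diag_fun (\<lambda>s. cos (s*t) - 1) S * transpose_mat W)"
    by simp_all
  moreover have "geod X U S V t \<in> carrier_mat n r" using geod_carrier[of X U S V t] U V by simp
  ultimately show ?thesis by (simp add: transp_expand[OF _ U' S' V'])
qed

lemma transp_round_trip_perp:
  assumes "\<forall>i<r. S $$ (i,i) \<ge> 0"
    and "thin_svd (- (transp X U S V t * (U * S * transpose_mat V))) U' S' V'"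
  shows "transpose_mat Xp * (transp (geod X U S V t) U' S' V' t * (transp X U S V t * Xp)) = 1\<^sub>m m"
  unfolding transp_reverse_eq[OF assms] W_def
  apply (simp add: geodesic_simps)
  apply (simp only: perp_block_def[symmetric])
  apply (intro eq_matI)
   apply (simp_all add: index_perp_block sum.distrib[symmetric])
  apply (intro sum.neutral ballI)
  apply (simp add: sin_mult_sin algebra_simps)
  done

end

lemma transported_local_operator_eq:
  fixes X Xp Delta U S V Ahat A U' S' V' :: "real mat"
  assumes X: "X \<in> carrier_mat n r" and XX: "transpose_mat X * X = 1\<^sub>m r"
    and Xp: "Xp \<in> carrier_mat n m" and XpXp: "transpose_mat Xp * Xp = 1\<^sub>m m"
    and XXp: "transpose_mat X * Xp = 0\<^sub>m r m"
    and Delta: "Delta \<in> carrier_mat n r" and Delta_tangent: "transpose_mat X * Delta = 0\<^sub>m r r"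
    and svd: "thin_svd Delta U S V"
    and Ahat: "Ahat \<in> carrier_mat (m * r) (m * r)"
    and A_eq: "A = kron (1\<^sub>m r) Xp * Ahat * kron (1\<^sub>m r) (transpose_mat Xp)"
    and svd': "thin_svd (- (transp X U S V t * Delta)) U' S' V'"
  shows "kron (1\<^sub>m r) (transpose_mat (transp X U S V t * Xp)) *
      (kron (1\<^sub>m r) (transp X U S V t) * A * kron (1\<^sub>m r) (transp (geod X U S V t) U' S' V' t)) *
      kron (1\<^sub>m r) (transp X U S V t * Xp) = Ahat"
proof -
  from svd Delta have U: "U \<in> carrier_mat n r" and S: "S \<in> carrier_mat r r" and V: "V \<in> carrier_mat r r"
    and UU: "transpose_mat U * U = 1\<^sub>m r" and S_diag: "\<forall>i<r. \<forall>j<r. i \<noteq> j \<longrightarrow> S $$ (i,j) = 0"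
    and S_nonneg: "\<forall>i<r. S $$ (i,i) \<ge> 0" and VV: "transpose_mat V * V = 1\<^sub>m r"
    and Delta_eq: "Delta = U * S * transpose_mat V"
    unfolding thin_svd_def by auto
  have "transpose_mat X * Delta * V = transpose_mat X * U * S * (transpose_mat V * V)"
    unfolding Delta_eq using X U S V by (simp add: mult_assoc_dim)
  then have "transpose_mat X * U * S = 0\<^sub>m r r"
    using Delta_tangent VV X U S V by (simp add: zero_mult_dim)
  then interpret grassmann_geodesic n r m X Xp U S V t
    using X Xp U S V XX XpXp XXp UU VV S_diag by unfold_locales
  let ?K = "kron (1\<^sub>m r)" and ?T = "transp X U S V t" and ?T' = "transp (geod X U S V t) U' S' V' t"
  have T: "?T \<in> carrier_mat n n" using transp_carrier[of X U S V t] U by simp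
  then have "dim_row U' = n" using svd' Delta unfolding thin_svd_def by auto
  then have T': "?T' \<in> carrier_mat n n" using transp_carrier[of _ U' S' V' t] by simp
  have "?K (transpose_mat (?T * Xp)) * (?K ?T * A * ?K ?T') * ?K (?T * Xp)
      = ?K (transpose_mat (?T * Xp) * ?T) * A * ?K (?T' * (?T * Xp))"
  proof -
    have "dim_row A = r * n" "dim_col A = r * n" using A_eq Xp Ahat by (simp_all add: mult.commute)
    then show ?thesis using T T' Xp by (simp add: mult_assoc_dim kron_one_mult[symmetric])
  qed
  also have "\<dots> = Ahat"
  proof (rule kron_sandwich_eq[OF Xp Ahat A_eq])
    show "transpose_mat (?T * Xp) * ?T * Xp = 1\<^sub>m m"
      using transp_perp_orthonormal T Xp by (simp add: mult_assoc_dim)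
    show "transpose_mat Xp * (?T' * (?T * Xp)) = 1\<^sub>m m"
      using transp_round_trip_perp[OF S_nonneg] svd' unfolding Delta_eq by blast
  qed (use T T' Xp in auto)
  finally show ?thesis .
qed

theorem theorem6p4:
  fixes n r :: nat
    and X Xp Delta U S V Ahat A :: "real mat"
  assumes X_dim: "X \<in> carrier_mat n r"
    and X_orth: "transpose_mat X * X = 1\<^sub>m r"
    and Xp_dim: "Xp \<in> carrier_mat n (n - r)"
    and XXp_orth: "orth_square (hcat X Xp)"
    and Delta_dim: "Delta \<in> carrier_mat n r"
    and Delta_tan: "transpose_mat X * Delta = 0\<^sub>m r r"
    and svd: "thin_svd Delta U S V"
    and Ahat_dim: "Ahat \<in> carrier_mat ((n - r) * r) ((n - r) * r)"
    and A_dim: "A \<in> carrier_mat (n * r) (n * r)"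
    and A_corr: "\<forall>D1 D2. D1 \<in> carrier_mat (n - r) r \<longrightarrow> D2 \<in> carrier_mat (n - r) r \<longrightarrow>
                   vecm D2 = Ahat *\<^sub>v vecm D1 \<longrightarrow> A *\<^sub>v vecm (Xp * D1) = vecm (Xp * D2)"
    and A_proj: "\<forall>w \<in> carrier_vec (n * r).
                   A *\<^sub>v w = A *\<^sub>v (kron (1\<^sub>m r) (Xp * transpose_mat Xp) *\<^sub>v w)"
  shows "A = kron (1\<^sub>m r) Xp * Ahat * kron (1\<^sub>m r) (transpose_mat Xp)
       \<and> Ahat = kron (1\<^sub>m r) (transpose_mat Xp) * A * kron (1\<^sub>m r) Xp
       \<and> (\<forall>t U2 S2 V2.
            thin_svd (- (transp X U S V t * Delta)) U2 S2 V2 \<longrightarrow>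
            (let T = transp X U S V t;
                 Xt = geod X U S V t;
                 Ttil = transp Xt U2 S2 V2 t;
                 Xpt = T * Xp;
                 At = kron (1\<^sub>m r) T * A * kron (1\<^sub>m r) Ttil
             in kron (1\<^sub>m r) (transpose_mat Xpt) * At * kron (1\<^sub>m r) Xpt = Ahat))"
proof -
  have XpXp: "transpose_mat Xp * Xp = 1\<^sub>m (n - r)" and XXp: "transpose_mat X * Xp = 0\<^sub>m r (n - r)"
    using orth_square_hcat[OF X_dim Xp_dim XXp_orth] by auto
  have A_eq: "A = kron (1\<^sub>m r) Xp * Ahat * kron (1\<^sub>m r) (transpose_mat Xp)"
    using global_operator_eq[OF Xp_dim Ahat_dim A_dim A_corr A_proj] .
  moreover have "kron (1\<^sub>m r) (transpose_mat Xp) * A * kron (1\<^sub>m r) Xp = Ahat"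
    using kron_sandwich_eq[OF Xp_dim Ahat_dim A_eq] Xp_dim XpXp by auto
  moreover note transported_local_operator_eq[OF X_dim X_orth Xp_dim XpXp XXp Delta_dim Delta_tan svd
      Ahat_dim A_eq]
  ultimately show ?thesis unfolding Let_def by (blast intro: sym)
qed

end
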